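(* Let $\lambda>0$ and, for $a_1>0$, $a_2\in\mathbb R$, $u\in[0,1)$, let $B(a_1,a_2;u)=\int_0^u t^{a_1-1}(1-t)^{a_2-1}\,dt$ denote the incomplete Beta function and $\gamma(\lambda,x)=\int_0^x e^{-t}t^{\lambda-1}\,dt$ the incomplete gamma function. (i) If $\lambda<1$, then for all $x,y>0$, $$\frac{\Gamma(\lambda+y)}{\Gamma(y)}\, B\Big(\lambda, y; \frac{x}{x+y}\Big)<\gamma(\lambda,x).$$ (ii) If $\lambda>1$, then for all $x,y>0$, $$y^{\lambda}\, B\Big(\lambda, y; \frac{x}{x+y}\Big)<\gamma(\lambda,x).$$ *)

theory Defs
  imports "HOL-Analysis.Analysis"
begin

definition incomplete_beta :: "real \<Rightarrow> real \<Rightarrow> real \<Rightarrow> real" where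
  "incomplete_beta a1 a2 u = integral {0..u} (\<lambda>t. t powr (a1 - 1) * (1 - t) powr (a2 - 1))"

definition lower_incomplete_gamma :: "real \<Rightarrow> real \<Rightarrow> real" where
  "lower_incomplete_gamma lam x = integral {0..x} (\<lambda>t. exp (- t) * t powr (lam - 1))"

end

theory Submission
  imports Defs "HOL-Real_Asymp.Real_Asymp"
begin

(* Fix y > 0 and K > 0 and put D(x) = gamma(lam,x) - K B(lam,y; x/(x+y)), so that D(0) = 0 and
   D(x) tends to Gamma(lam) - K B(lam,y). The derivative
     D'(x) = x^(lam-1) (e^(-x) - K y^y (x+y)^(-(lam+y)))
   has the sign of (lam+y) ln(x+y) - x - ln(K y^y), a concave function that is nonnegative at 0
   when K <= y^lam and tends to -oo. Hence D first increases and then decreases, so it is positive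
   on (0,oo) as soon as also K B(lam,y) <= Gamma(lam). For K = Gamma(lam+y)/Gamma(y) (lam < 1) and
   K = y^lam (lam > 1) the two conditions on K are Wendel's inequalities, which follow from the
   log-convexity of Gamma. *)

lemma strict_mono_on_antimono_on_of_deriv_sign:
  fixes f f' :: "real \<Rightarrow> real"
  assumes cont: "\<And>b. continuous_on {0..b} f"
    and deriv: "\<And>t. 0 < t \<Longrightarrow> (f has_real_derivative f' t) (at t)"
    and up: "\<And>t. 0 < t \<Longrightarrow> t < a \<Longrightarrow> f' t > 0"
    and down: "\<And>t. a < t \<Longrightarrow> f' t < 0"
    and "a \<ge> 0"
  shows "strict_mono_on {0..a} f" "strict_antimono_on {a..} f"
proof -
  have cont': "continuous_on {r..s} f" if "0 \<le> r" for r s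
    using continuous_on_subset[OF cont[of s]] that by auto
  show "strict_mono_on {0..a} f"
  proof (rule strict_mono_onI)
    fix r s assume rs: "r \<in> {0..a}" "s \<in> {0..a}" "r < s"
    show "f r < f s"
    proof (rule DERIV_pos_imp_increasing_open[OF \<open>r < s\<close> _ cont'])
      fix t assume "r < t" "t < s"
      with rs have "0 < t" "t < a" by auto
      then show "\<exists>d. (f has_real_derivative d) (at t) \<and> d > 0"
        using deriv up by blast
    qed (use rs in simp)
  qed
  show "strict_antimono_on {a..} f"
  proof (rule monotone_onI)
    fix r s assume rs: "r \<in> {a..}" "s \<in> {a..}" "r < s"
    show "f s < f r"
    proof (rule DERIV_neg_imp_decreasing_open[OF \<open>r < s\<close> _ cont'])
      fix t assume "r < t" "t < s"
      with rs \<open>a \<ge> 0\<close> have "0 < t" "a < t" by auto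
      then show "\<exists>d. (f has_real_derivative d) (at t) \<and> d < 0"
        using deriv down by blast
    qed (use rs \<open>a \<ge> 0\<close> in simp)
  qed
qed

lemma pos_if_rises_then_falls:
  fixes f :: "real \<Rightarrow> real"
  assumes up: "strict_mono_on {0..a} f" and down: "strict_antimono_on {a..} f"
    and "f 0 = 0" and lim: "(f \<longlongrightarrow> L) at_top" and "L \<ge> 0" and "x > 0"
  shows "f x > 0"
proof (cases "x \<le> a")
  case True
  then show ?thesis
    using strict_mono_onD[OF up, of 0 x] \<open>f 0 = 0\<close> \<open>x > 0\<close> by simp
next
  case False
  have "f z \<le> f (x + 1)" if "z \<ge> x + 1" for z
  proof (cases "z = x + 1")
    case False
    then show ?thesis
      using monotone_onD[OF down, of "x + 1" z] \<open>\<not> x \<le> a\<close> that by simp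
  qed simp
  then have "L \<le> f (x + 1)"
    by (intro tendsto_upperbound[OF lim] eventually_at_top_linorderI) auto
  also have "\<dots> < f x"
    using monotone_onD[OF down, of x "x + 1"] False by simp
  finally show ?thesis
    using \<open>L \<ge> 0\<close> by simp
qed

lemma sign_change_if_rises_then_falls:
  fixes f :: "real \<Rightarrow> real"
  assumes cont: "\<And>b. continuous_on {0..b} f"
    and up: "strict_mono_on {0..a} f" and down: "strict_antimono_on {a..} f"
    and "a > 0" and "f 0 \<ge> 0" and "eventually (\<lambda>x. f x < 0) at_top"
  obtains s where "s > 0" "\<And>x. 0 < x \<Longrightarrow> x < s \<Longrightarrow> f x > 0" "\<And>x. s < x \<Longrightarrow> f x < 0"
proof -
  obtain M where M: "M > a" "f M < 0"
    using eventually_conj[OF \<open>eventually (\<lambda>x. f x < 0) at_top\<close> eventually_gt_at_top[of a]]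
    by (auto simp: eventually_at_top_linorder)
  have "f a > 0"
    using strict_mono_onD[OF up, of 0 a] \<open>a > 0\<close> \<open>f 0 \<ge> 0\<close> by simp
  moreover have "continuous_on {a..M} f"
    using continuous_on_subset[OF cont[of M]] \<open>a > 0\<close> by auto
  ultimately obtain s where s: "a \<le> s" "s \<le> M" "f s = 0"
    using IVT2'[of f M 0 a] M by auto
  show ?thesis
  proof
    show "s > 0"
      using s \<open>a > 0\<close> by simp
  next
    fix x assume x: "0 < x" "x < s"
    show "f x > 0"
    proof (cases "x \<le> a")
      case True
      then show ?thesis
        using strict_mono_onD[OF up, of 0 x] x \<open>f 0 \<ge> 0\<close> by simp
    next
      case False
      then show ?thesis
        using monotone_onD[OF down, of x s] x s by simp
    qed
  next
    fix x assume "s < x"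
    then show "f x < 0"
      using monotone_onD[OF down, of s x] s by simp
  qed
qed

lemma has_real_derivative_integral_interior:
  fixes f :: "real \<Rightarrow> real"
  assumes "f integrable_on {a..b}" "a < x" "x < b" "isCont f x"
  shows "((\<lambda>u. integral {a..u} f) has_real_derivative f x) (at x)"
proof -
  have "((\<lambda>u. integral {a..u} f) has_vector_derivative f x) (at x within {a..b})"
    using integral_has_vector_derivative_continuous_at[of f a b x "{}"] assms
    by (simp add: continuous_at_imp_continuous_within)
  then show ?thesis
    using assms by (simp add: at_within_Icc_at has_real_derivative_iff_has_vector_derivative)
qed

lemma has_integral_Gamma_real:
  fixes lam :: real
  assumes "lam > 0"
  shows "((\<lambda>t. exp (- t) * t powr (lam - 1)) has_integral Gamma lam) {0..}"
  using Gamma_integral_real[OF assms]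
  by (rule has_integral_eq[rotated]) (simp add: exp_minus field_simps)

lemma lower_incomplete_gamma_integrand_integrable:
  fixes lam :: real
  assumes "lam > 0"
  shows "(\<lambda>t. exp (- t) * t powr (lam - 1)) integrable_on {0..x}"
  using has_integral_Gamma_real[OF assms]
  by (intro integrable_on_subinterval[of _ "{0..}"]) auto

lemma continuous_on_lower_incomplete_gamma:
  fixes lam :: real
  assumes "lam > 0"
  shows "continuous_on {0..b} (lower_incomplete_gamma lam)"
  unfolding lower_incomplete_gamma_def
  by (rule indefinite_integral_continuous_1[OF lower_incomplete_gamma_integrand_integrable[OF assms]])

lemma has_real_derivative_lower_incomplete_gamma:
  fixes lam x :: real
  assumes "lam > 0" "x > 0"
  shows "(lower_incomplete_gamma lam has_real_derivative exp (- x) * x powr (lam - 1)) (at x)"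
  unfolding lower_incomplete_gamma_def using assms
  by (intro has_real_derivative_integral_interior[where b = "x + 1"]
        lower_incomplete_gamma_integrand_integrable)
     (auto intro!: continuous_intros)

lemma lower_incomplete_gamma_tendsto_Gamma:
  fixes lam :: real
  assumes "lam > 0"
  shows "(lower_incomplete_gamma lam \<longlongrightarrow> Gamma lam) at_top"
proof -
  let ?g = "\<lambda>t::real. exp (- t) * t powr (lam - 1)"
  have int: "set_integrable lebesgue {0..} ?g"
    using nonnegative_absolutely_integrable_1 has_integral_Gamma_real[OF assms] by force
  have "((\<lambda>b. set_lebesgue_integral lebesgue {0..b} ?g)
          \<longlongrightarrow> set_lebesgue_integral lebesgue {0..} ?g) at_top"
    by (rule tendsto_set_lebesgue_integral_at_top[OF _ int]) auto
  moreover have "set_lebesgue_integral lebesgue {0..} ?g = Gamma lam"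
    using set_lebesgue_integral_eq_integral(2)[OF int] has_integral_Gamma_real[OF assms]
    by (simp add: integral_unique)
  moreover have "set_lebesgue_integral lebesgue {0..b} ?g = lower_incomplete_gamma lam b" for b
    using set_lebesgue_integral_eq_integral(2)[OF set_integrable_subset[OF int]]
    by (cases "b \<ge> 0") (auto simp: lower_incomplete_gamma_def)
  ultimately show ?thesis by simp
qed

lemma incomplete_beta_integrand_integrable:
  fixes lam y :: real
  assumes "lam > 0" "y > 0"
  shows "(\<lambda>t. t powr (lam - 1) * (1 - t) powr (y - 1)) integrable_on {0..1}"
  using has_integral_Beta_real[OF assms] by blast

lemma incomplete_beta_1:
  fixes lam y :: real
  assumes "lam > 0" "y > 0"
  shows "incomplete_beta lam y 1 = Beta lam y"
  using has_integral_Beta_real[OF assms] by (simp add: incomplete_beta_def integral_unique)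

lemma continuous_on_incomplete_beta:
  fixes lam y :: real
  assumes "lam > 0" "y > 0"
  shows "continuous_on {0..1} (incomplete_beta lam y)"
  unfolding incomplete_beta_def
  by (rule indefinite_integral_continuous_1[OF incomplete_beta_integrand_integrable[OF assms]])

lemma has_real_derivative_incomplete_beta:
  fixes lam y u :: real
  assumes "lam > 0" "y > 0" "0 < u" "u < 1"
  shows "(incomplete_beta lam y has_real_derivative u powr (lam - 1) * (1 - u) powr (y - 1)) (at u)"
  unfolding incomplete_beta_def
proof (rule has_real_derivative_integral_interior[OF incomplete_beta_integrand_integrable[OF assms(1,2)]])
  show "isCont (\<lambda>t. t powr (lam - 1) * (1 - t) powr (y - 1)) u"
    using assms by (intro continuous_intros) auto
qed (use assms in auto)

lemma has_real_derivative_incomplete_beta_ratio: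
  fixes lam y x :: real
  assumes "lam > 0" "y > 0" "x > 0"
  shows "((\<lambda>x. incomplete_beta lam y (x / (x + y))) has_real_derivative
           x powr (lam - 1) * y powr y / (x + y) powr (lam + y)) (at x)"
proof -
  let ?u = "x / (x + y)"
  have u: "0 < ?u" "?u < 1" "1 - ?u = y / (x + y)"
    using assms by (auto simp: field_simps)
  have "((\<lambda>x. x / (x + y)) has_real_derivative y / (x + y) powr 2) (at x)"
    using assms by (auto intro!: derivative_eq_intros simp: field_simps power2_eq_square)
  from DERIV_chain2[OF has_real_derivative_incomplete_beta[OF assms(1,2) u(1,2)] this]
  have "((\<lambda>x. incomplete_beta lam y (x / (x + y))) has_real_derivative
          ?u powr (lam - 1) * (y / (x + y)) powr (y - 1) * (y / (x + y) powr 2)) (at x)"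
    by (simp only: u(3))
  also have "?u powr (lam - 1) * (y / (x + y)) powr (y - 1) * (y / (x + y) powr 2)
      = x powr (lam - 1) * (y powr (y - 1) * y powr 1)
        / ((x + y) powr (lam - 1) * (x + y) powr (y - 1) * (x + y) powr 2)"
    using assms by (simp add: powr_divide)
  also have "\<dots> = x powr (lam - 1) * y powr y / (x + y) powr (lam + y)"
    by (simp only: powr_add[symmetric]) (simp add: algebra_simps)
  finally show ?thesis .
qed

lemma continuous_on_incomplete_beta_ratio:
  fixes lam y :: real
  assumes "lam > 0" "y > 0"
  shows "continuous_on {0..b} (\<lambda>x. incomplete_beta lam y (x / (x + y)))"
proof (rule continuous_on_compose2[OF continuous_on_incomplete_beta[OF assms]])
  show "continuous_on {0..b} (\<lambda>x. x / (x + y))"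
    using assms by (intro continuous_intros) auto
qed (use assms in auto)

lemma incomplete_beta_ratio_tendsto_Beta:
  fixes lam y :: real
  assumes "lam > 0" "y > 0"
  shows "((\<lambda>x. incomplete_beta lam y (x / (x + y))) \<longlongrightarrow> Beta lam y) at_top"
proof -
  have "((\<lambda>x. x / (x + y)) \<longlongrightarrow> 1) at_top"
    by real_asymp
  moreover have "eventually (\<lambda>x. x / (x + y) \<in> {0..1}) at_top"
    using eventually_ge_at_top[of 0] by eventually_elim (use assms in auto)
  ultimately have "((\<lambda>x. incomplete_beta lam y (x / (x + y))) \<longlongrightarrow> incomplete_beta lam y 1) at_top"
    by (intro continuous_on_tendsto_compose[OF continuous_on_incomplete_beta[OF assms]]) auto
  then show ?thesis
    by (simp add: incomplete_beta_1[OF assms])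
qed

lemma single_crossing_ln_add_minus_id:
  fixes lam y C :: real
  assumes lam: "lam > 0" and y: "y > 0" and C: "C \<le> (lam + y) * ln y"
  obtains s where "s > 0"
    "\<And>x. 0 < x \<Longrightarrow> x < s \<Longrightarrow> (lam + y) * ln (x + y) - x > C"
    "\<And>x. s < x \<Longrightarrow> (lam + y) * ln (x + y) - x < C"
proof -
  define f where "f x = (lam + y) * ln (x + y) - x - C" for x
  have cont: "continuous_on {0..b} f" for b
    unfolding f_def using y by (intro continuous_intros) auto
  have deriv: "(f has_real_derivative (lam + y) / (t + y) - 1) (at t)" if "t > 0" for t
    unfolding f_def using that y by (auto intro!: derivative_eq_intros)
  have up: "(lam + y) / (t + y) - 1 > 0" if "0 < t" "t < lam" for t
    using that y by (simp add: field_simps)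
  have down: "(lam + y) / (t + y) - 1 < 0" if "lam < t" for t
    using that y lam by (simp add: field_simps)
  have "f 0 \<ge> 0"
    using C y by (simp add: f_def)
  moreover have "eventually (\<lambda>x. f x < 0) at_top"
    unfolding f_def by real_asymp
  ultimately show ?thesis
    using sign_change_if_rises_then_falls[OF cont
        strict_mono_on_antimono_on_of_deriv_sign[OF cont deriv up down less_imp_le[OF lam]] lam]
      that
    by (auto simp: f_def)
qed

lemma single_crossing_exp_minus_scaled_powr:
  fixes lam y K :: real
  assumes lam: "lam > 0" and y: "y > 0" and K: "K > 0" "K \<le> y powr lam"
  obtains s where "s > 0"
    "\<And>t. 0 < t \<Longrightarrow> t < s \<Longrightarrow> K * y powr y / (t + y) powr (lam + y) < exp (- t)"
    "\<And>t. s < t \<Longrightarrow> K * y powr y / (t + y) powr (lam + y) > exp (- t)"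
proof -
  define C where "C = ln K + y * ln y"
  have eq: "K * y powr y / (t + y) powr (lam + y) = exp (C - (lam + y) * ln (t + y))"
    if "t > 0" for t
    using K y that by (simp add: C_def powr_def exp_diff exp_add)
  have "ln K \<le> lam * ln y"
    using K y by (simp flip: ln_powr)
  then have "C \<le> (lam + y) * ln y"
    by (simp add: C_def algebra_simps)
  then obtain s where "s > 0"
    and above: "\<And>t. 0 < t \<Longrightarrow> t < s \<Longrightarrow> (lam + y) * ln (t + y) - t > C"
    and below: "\<And>t. s < t \<Longrightarrow> (lam + y) * ln (t + y) - t < C"
    using single_crossing_ln_add_minus_id[OF lam y] by blast
  show ?thesis
  proof (rule that[OF \<open>s > 0\<close>])
    fix t assume "0 < t" "t < s"
    then show "K * y powr y / (t + y) powr (lam + y) < exp (- t)"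
      using above[of t] by (simp add: eq)
  next
    fix t assume "s < t"
    then show "K * y powr y / (t + y) powr (lam + y) > exp (- t)"
      using below[of t] \<open>s > 0\<close> by (simp add: eq)
  qed
qed

lemma scaled_incomplete_beta_less_lower_incomplete_gamma:
  fixes lam y K x :: real
  assumes lam: "lam > 0" and y: "y > 0" and K: "K > 0" "K \<le> y powr lam"
    and K_Beta: "K * Beta lam y \<le> Gamma lam" and x: "x > 0"
  shows "K * incomplete_beta lam y (x / (x + y)) < lower_incomplete_gamma lam x"
proof -
  define D where
    "D x = lower_incomplete_gamma lam x - K * incomplete_beta lam y (x / (x + y))" for x
  define D' where
    "D' t = t powr (lam - 1) * (exp (- t) - K * y powr y / (t + y) powr (lam + y))" for t
  have deriv: "(D has_real_derivative D' t) (at t)" if "t > 0" for t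
    unfolding D_def D'_def
    using DERIV_diff[OF has_real_derivative_lower_incomplete_gamma[OF lam that]
        DERIV_cmult[OF has_real_derivative_incomplete_beta_ratio[OF lam y that], of K]]
    by (simp add: algebra_simps)
  obtain s where "s > 0"
    and above: "\<And>t. 0 < t \<Longrightarrow> t < s \<Longrightarrow> K * y powr y / (t + y) powr (lam + y) < exp (- t)"
    and below: "\<And>t. s < t \<Longrightarrow> K * y powr y / (t + y) powr (lam + y) > exp (- t)"
    using single_crossing_exp_minus_scaled_powr[OF lam y K] by blast
  have up: "D' t > 0" if "0 < t" "t < s" for t
    using above[OF that] that by (simp add: D'_def)
  have down: "D' t < 0" if "s < t" for t
    using below[OF that] that \<open>s > 0\<close> by (simp add: D'_def mult_pos_neg)
  have cont: "continuous_on {0..b} D" for b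
    unfolding D_def
    by (intro continuous_intros continuous_on_lower_incomplete_gamma
          continuous_on_incomplete_beta_ratio lam y)
  have lim: "(D \<longlongrightarrow> Gamma lam - K * Beta lam y) at_top"
    unfolding D_def
    by (intro tendsto_intros lower_incomplete_gamma_tendsto_Gamma
          incomplete_beta_ratio_tendsto_Beta lam y)
  have "D 0 = 0"
    by (simp add: D_def lower_incomplete_gamma_def incomplete_beta_def)
  with strict_mono_on_antimono_on_of_deriv_sign[OF cont deriv up down less_imp_le[OF \<open>s > 0\<close>]]
  have "D x > 0"
    by (rule pos_if_rises_then_falls[OF _ _ _ lim]) (use K_Beta x in auto)
  then show ?thesis
    by (simp add: D_def)
qed

lemma ln_Gamma_plus1_real:
  fixes y :: real
  assumes "y > 0"
  shows "ln (Gamma (y + 1)) = ln y + ln (Gamma y)"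
proof -
  have "Gamma (y + 1) = y * Gamma y"
    using assms by (intro Gamma_plus1) (auto elim: nonpos_Ints_cases)
  moreover have "Gamma y \<noteq> 0"
    using Gamma_real_pos[OF assms] by linarith
  ultimately show ?thesis
    using assms by (simp add: ln_mult)
qed

lemma ln_Gamma_mult_powr:
  fixes lam y :: real
  assumes "y > 0"
  shows "ln (Gamma y * y powr lam) = ln (Gamma y) + lam * ln y"
  using ln_mult_pos[OF Gamma_real_pos[OF assms], of "y powr lam"] assms by (simp add: ln_powr)

lemma Gamma_add_le_Gamma_mult_powr:
  fixes lam y :: real
  assumes "0 \<le> lam" "lam \<le> 1" "y > 0"
  shows "Gamma (lam + y) \<le> Gamma y * y powr lam"
proof -
  have "ln (Gamma (lam + y)) = (ln \<circ> Gamma) ((1 - lam) *\<^sub>R y + lam *\<^sub>R (y + 1))"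
    by (simp add: algebra_simps)
  also have "\<dots> \<le> (1 - lam) * (ln \<circ> Gamma) y + lam * (ln \<circ> Gamma) (y + 1)"
    using assms by (intro convex_onD[OF log_convex_Gamma_real]) auto
  also have "\<dots> = ln (Gamma y * y powr lam)"
    unfolding comp_def ln_Gamma_plus1_real[OF assms(3)] ln_Gamma_mult_powr[OF assms(3)]
    by (simp add: algebra_simps)
  finally show ?thesis
    using assms by simp
qed

lemma Gamma_mult_powr_le_Gamma_add:
  fixes lam y :: real
  assumes "1 \<le> lam" "y > 0"
  shows "Gamma y * y powr lam \<le> Gamma (lam + y)"
proof -
  have "(1 - 1 / lam) *\<^sub>R y + (1 / lam) *\<^sub>R (lam + y) = y + 1"
    using assms by (simp add: field_simps)
  then have "ln (Gamma (y + 1)) \<le> (1 - 1 / lam) * ln (Gamma y) + (1 / lam) * ln (Gamma (lam + y))"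
    using assms convex_onD[OF log_convex_Gamma_real, of "1 / lam" y "lam + y"] by simp
  from mult_left_mono[OF this, of lam]
  have "lam * ln (Gamma (y + 1)) \<le> (lam - 1) * ln (Gamma y) + ln (Gamma (lam + y))"
    using assms by (simp add: algebra_simps)
  then have "ln (Gamma y * y powr lam) \<le> ln (Gamma (lam + y))"
    unfolding ln_Gamma_plus1_real[OF assms(2)] ln_Gamma_mult_powr[OF assms(2)]
    by (simp add: algebra_simps)
  then show ?thesis
    using assms by simp
qed

theorem proposition1p1:
  fixes lam :: real
  assumes "lam > 0"
  shows "(lam < 1 \<longrightarrow> (\<forall>x y :: real. x > 0 \<longrightarrow> y > 0 \<longrightarrow>
            Gamma (lam + y) / Gamma y * incomplete_beta lam y (x / (x + y))
              < lower_incomplete_gamma lam x))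
       \<and> (lam > 1 \<longrightarrow> (\<forall>x y :: real. x > 0 \<longrightarrow> y > 0 \<longrightarrow>
            y powr lam * incomplete_beta lam y (x / (x + y))
              < lower_incomplete_gamma lam x))"
proof (intro conjI impI allI)
  fix x y :: real
  assume "lam < 1" "x > 0" "y > 0"
  have "Gamma (lam + y) / Gamma y \<le> y powr lam"
    using Gamma_add_le_Gamma_mult_powr[of lam y] assms \<open>lam < 1\<close> \<open>y > 0\<close>
    by (simp add: divide_le_eq mult.commute)
  moreover have "Gamma (lam + y) / Gamma y * Beta lam y \<le> Gamma lam"
    using assms \<open>y > 0\<close> by (simp add: Beta_def)
  ultimately show "Gamma (lam + y) / Gamma y * incomplete_beta lam y (x / (x + y))
      < lower_incomplete_gamma lam x"
    using assms \<open>x > 0\<close> \<open>y > 0\<close> by (intro scaled_incomplete_beta_less_lower_incomplete_gamma) auto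
next
  fix x y :: real
  assume "lam > 1" "x > 0" "y > 0"
  have "y powr lam * Beta lam y = Gamma lam * (Gamma y * y powr lam / Gamma (lam + y))"
    by (simp add: Beta_def)
  also have "\<dots> \<le> Gamma lam"
    using Gamma_mult_powr_le_Gamma_add[of lam y] assms \<open>lam > 1\<close> \<open>y > 0\<close>
    by (intro mult_left_le) auto
  finally show "y powr lam * incomplete_beta lam y (x / (x + y)) < lower_incomplete_gamma lam x"
    using assms \<open>x > 0\<close> \<open>y > 0\<close> by (intro scaled_incomplete_beta_less_lower_incomplete_gamma) auto
qed

end
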